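(* For the generalized coin-tossing process with $p=\tfrac12$ (fair coins) and OPs of length $m=3$, $\mathbf p=(\tfrac14,\tfrac18,\tfrac18,\tfrac18,\tfrac18,\tfrac14)^\top$ and $$\Sigma=\frac1{64}\begin{pmatrix}20&-2&-2&-2&-2&-12\\-2&5&1&-3&1&-2\\-2&1&5&1&-3&-2\\-2&-3&1&5&1&-2\\-2&1&-3&1&5&-2\\-12&-2&-2&-2&-2&20\end{pmatrix}.$$
   Context: Generalized coin-tossing (GCT) process with parameter $p\in(0,1)$, $q=1-p$: a random strict total order on objects $(X_t)_{t\in\mathbb Z}$ defined from mutually independent Bernoulli variables $\xi_{s,t}$, $s<t$, with $\mathbb P(\xi_{s,t}=1)=p$, recursively in $t-s$: if $t-s=1$, $X_s<X_t$ iff $\xi_{s,t}=1$; if $t-s\ge2$ and there is $r\in(s,t)$ with $X_s<X_r<X_t$ then $X_s<X_t$; if there is $r\in(s,t)$ with $X_s>X_r>X_t$ then $X_s>X_t$; otherwise $X_s<X_t$ iff $\xi_{s,t}=1$. $\Pi_t$ is the permutation in $S_3$ giving the ranks of $(X_t,X_{t+1},X_{t+2})$; OPs in lexicographic order are $\pi_1=(1,2,3)$, $\pi_2=(1,3,2)$, $\pi_3=(2,1,3)$, $\pi_4=(2,3,1)$, $\pi_5=(3,1,2)$, $\pi_6=(3,2,1)$. $p_i=\mathbb P(\Pi_0=\pi_i)$, $p_{ij}(k)=\mathbb P(\Pi_0=\pi_i,\Pi_k=\pi_j)$, $\Sigma=(\sigma_{ij})$ with $\sigma_{ij}=p_i(\delta_{ij}-p_j)+\sum_{k=1}^\infty\big(p_{ij}(k)+p_{ji}(k)-2p_ip_j\big)$.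 *)

theory Defs
  imports "HOL-Probability.Probability"
begin

text \<open>Generalized coin-tossing (GCT) process. The coins are
  xi (s,t) for s < t (True means xi = 1). gct_lt xi s t (for s < t) says X_s < X_t.\<close>

function gct_lt :: "(nat \<times> nat \<Rightarrow> bool) \<Rightarrow> nat \<Rightarrow> nat \<Rightarrow> bool" where
  "gct_lt xi s t =
     (if t \<le> s then False
      else if t = Suc s then xi (s, t)
      else if (\<exists>r\<in>{s<..<t}. gct_lt xi s r \<and> gct_lt xi r t) then True
      else if (\<exists>r\<in>{s<..<t}. \<not> gct_lt xi s r \<and> \<not> gct_lt xi r t) then False
      else xi (s, t))"
  by pat_completeness auto
termination
  by (relation "Wellfounded.measure (\<lambda>(xi, s, t). t - s)") auto

definition gct_less :: "(nat \<times> nat \<Rightarrow> bool) \<Rightarrow> nat \<Rightarrow> nat \<Rightarrow> bool" where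
  "gct_less xi a b =
     (if a < b then gct_lt xi a b else if b < a then \<not> gct_lt xi b a else False)"

definition gct_op :: "(nat \<times> nat \<Rightarrow> bool) \<Rightarrow> nat \<Rightarrow> nat list" where
  "gct_op xi t = map (\<lambda>i. 1 + card {j\<in>{0..<3::nat}. gct_less xi (t + j) (t + i)}) [0..<3]"

definition op_pi :: "nat \<Rightarrow> nat list" where
  "op_pi i = [[1,2,3],[1,3,2],[2,1,3],[2,3,1],[3,1,2],[3,2,1]] ! (i - 1)"

text \<open>Joint law of the coins xi (s,t), 0 \<le> s < t < n: independent Bernoulli(p).
  Events about positions 0..n-1 depend only on these coins.\<close>
definition coins :: "real \<Rightarrow> nat \<Rightarrow> (nat \<times> nat \<Rightarrow> bool) pmf" where
  "coins p n = Pi_pmf {(s, t). s < t \<and> t < n} False (\<lambda>_. bernoulli_pmf p)"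

definition gct_p :: "real \<Rightarrow> nat \<Rightarrow> real" where
  "gct_p p i = measure_pmf.prob (coins p 3) {xi. gct_op xi 0 = op_pi i}"

definition gct_pp :: "real \<Rightarrow> nat \<Rightarrow> nat \<Rightarrow> nat \<Rightarrow> real" where
  "gct_pp p i j k = measure_pmf.prob (coins p (k + 3))
      {xi. gct_op xi 0 = op_pi i \<and> gct_op xi k = op_pi j}"

definition gct_cov_term :: "real \<Rightarrow> nat \<Rightarrow> nat \<Rightarrow> nat \<Rightarrow> real" where
  "gct_cov_term p i j k = gct_pp p i j k + gct_pp p j i k - 2 * gct_p p i * gct_p p j"

definition gct_sigma :: "real \<Rightarrow> nat \<Rightarrow> nat \<Rightarrow> real" where
  "gct_sigma p i j = gct_p p i * ((if i = j then 1 else 0) - gct_p p j)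
      + (\<Sum>k. gct_cov_term p i j (Suc k))"

end

theory Submission
  imports Defs
begin

text \<open>
  The ordinal pattern \<open>\<Pi>\<^sub>t\<close> is a function of the three coins \<open>\<xi>(t,t+1)\<close>,
  \<open>\<xi>(t+1,t+2)\<close> and \<open>\<xi>(t,t+2)\<close> alone: the first two order the neighbours, and the third
  is consulted only when they disagree. Distinct coins are independent, so the pattern
  process is 1-dependent: for \<open>k \<ge> 2\<close> the patterns \<open>\<Pi>\<^sub>0\<close> and \<open>\<Pi>\<^sub>k\<close> read disjoint
  sets of coins and are independent. All covariance terms beyond lag one therefore vanish,
  and \<open>\<Sigma>\<close> only involves \<open>p\<^sub>i\<close> and \<open>p\<^sub>i\<^sub>j(1)\<close>. For fair coins these are counts of
  Boolean words of length 3 and 5, divided by \<open>2\<^sup>3\<close> and \<open>2\<^sup>5\<close>.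
\<close>

lemma map_Pi_pmf_eq_replicate_pmf:
  assumes "finite A" "distinct cs" "set cs \<subseteq> A"
  shows "map_pmf (\<lambda>f. map f cs) (Pi_pmf A dflt (\<lambda>_. q)) = replicate_pmf (length cs) q"
  using assms
proof (induction cs arbitrary: A)
  case Nil
  then show ?case by simp
next
  case (Cons c cs)
  have A: "A = insert c (A - {c})" "finite (A - {c})" "set cs \<subseteq> A - {c}"
    using Cons.prems by auto
  have "map_pmf (\<lambda>f. map f (c # cs)) (Pi_pmf A dflt (\<lambda>_. q)) =
      do {y \<leftarrow> q; bs \<leftarrow> map_pmf (\<lambda>f. map f cs) (Pi_pmf (A - {c}) dflt (\<lambda>_. q)); return_pmf (y # bs)}"
    using Cons.prems A
    by (subst A(1), subst Pi_pmf_insert')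
       (simp_all add: map_bind_pmf bind_map_pmf)
  then show ?case
    using Cons.IH[OF A(2) _ A(3)] Cons.prems by simp
qed

lemma replicate_pmf_Suc_conv_pair_pmf:
  "replicate_pmf (Suc n) q = map_pmf (\<lambda>(x, xs). x # xs) (pair_pmf q (replicate_pmf n q))"
  by (simp add: pair_pmf_def map_bind_pmf)

lemma pmf_replicate_pmf:
  "pmf (replicate_pmf n q) xs = (if length xs = n then (\<Prod>x\<leftarrow>xs. pmf q x) else 0)"
proof (induction n arbitrary: xs)
  case 0
  then show ?case by (simp add: indicator_def)
next
  case (Suc n)
  show ?case
  proof (cases xs)
    case Nil
    then show ?thesis
      by (simp add: replicate_pmf_Suc_conv_pair_pmf pmf_eq_0_set_pmf)
  next
    case (Cons x ys)
    have "pmf (replicate_pmf (Suc n) q) (x # ys) = pmf (pair_pmf q (replicate_pmf n q)) (x, ys)"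
      unfolding replicate_pmf_Suc_conv_pair_pmf
      using pmf_map_inj'[of "\<lambda>(x, xs). x # xs" _ "(x, ys)"] by (simp add: inj_def)
    then show ?thesis using Cons Suc.IH by (simp add: pmf_pair)
  qed
qed

lemma replicate_pmf_add_conv_pair_pmf:
  "replicate_pmf (m + n) q =
     map_pmf (\<lambda>(xs, ys). xs @ ys) (pair_pmf (replicate_pmf m q) (replicate_pmf n q))"
  by (simp add: replicate_pmf_distrib pair_pmf_def map_bind_pmf)

lemma measure_pmf_prob_cong_set_pmf:
  assumes "A \<inter> set_pmf M = B \<inter> set_pmf M"
  shows "measure_pmf.prob M A = measure_pmf.prob M B"
  by (metis assms measure_Int_set_pmf)

lemma prob_replicate_pmf_take_drop:
  fixes q :: "'a::countable pmf"
  shows "measure_pmf.prob (replicate_pmf (m + n) q) {bs. P (take m bs) \<and> Q (drop m bs)} =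
    measure_pmf.prob (replicate_pmf m q) {xs. P xs} * measure_pmf.prob (replicate_pmf n q) {ys. Q ys}"
proof -
  let ?M = "pair_pmf (replicate_pmf m q) (replicate_pmf n q)"
  let ?E = "{bs. P (take m bs) \<and> Q (drop m bs)}"
  have "set_pmf ?M \<subseteq> {(xs, ys). length xs = m}"
    by (auto simp: set_replicate_pmf)
  then have "(\<lambda>(xs, ys). xs @ ys) -` ?E \<inter> set_pmf ?M = ({xs. P xs} \<times> {ys. Q ys}) \<inter> set_pmf ?M"
    by auto
  then have "measure_pmf.prob (replicate_pmf (m + n) q) ?E = measure_pmf.prob ?M ({xs. P xs} \<times> {ys. Q ys})"
    unfolding replicate_pmf_add_conv_pair_pmf measure_map_pmf by (rule measure_pmf_prob_cong_set_pmf)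
  also have "\<dots> = measure_pmf.prob (replicate_pmf m q) {xs. P xs} * measure_pmf.prob (replicate_pmf n q) {ys. Q ys}"
    by (intro measure_pmf_prob_product countableI_type)
  finally show ?thesis .
qed

lemma prob_replicate_pmf_fair_coin:
  "measure_pmf.prob (replicate_pmf n (bernoulli_pmf (1/2))) {bs. P bs} =
     card {bs. length bs = n \<and> P bs} / 2 ^ n"
proof -
  let ?M = "replicate_pmf n (bernoulli_pmf (1/2))"
  let ?S = "{bs. length bs = n \<and> P bs}"
  have fin: "finite ?S"
    by (rule finite_subset[OF _ finite_lists_length_eq[of UNIV n]]) auto
  have "{bs. P bs} \<inter> set_pmf ?M = ?S \<inter> set_pmf ?M"
    by (auto simp: set_replicate_pmf)
  then have "measure_pmf.prob ?M {bs. P bs} = measure_pmf.prob ?M ?S"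
    by (rule measure_pmf_prob_cong_set_pmf)
  also have "\<dots> = (\<Sum>bs\<in>?S. pmf ?M bs)"
    using fin by (rule measure_measure_pmf_finite)
  also have "\<dots> = (\<Sum>bs\<in>?S. (1/2) ^ n)"
  proof (rule sum.cong)
    have "pmf (bernoulli_pmf (1/2)) = (\<lambda>_. 1/2)"
      by (rule ext) simp
    then show "pmf ?M bs = (1/2) ^ n" if "bs \<in> ?S" for bs
      using that by (simp add: pmf_replicate_pmf map_replicate_const)
  qed simp
  finally show ?thesis
    by (simp add: power_one_over)
qed

lemma card_bool_lists_eq_length_filter:
  "card {bs. length bs = n \<and> P bs} = length (filter P (List.n_lists n [False, True]))"
proof -
  let ?L = "filter P (List.n_lists n [False, True])"
  have "{bs. length bs = n \<and> P bs} = set ?L"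
    by (auto simp: set_n_lists)
  moreover have "card (set ?L) = length ?L"
    by (intro distinct_card distinct_filter distinct_n_lists) simp
  ultimately show ?thesis
    by simp
qed

declare gct_lt.simps [simp del]

lemma gct_lt_Suc: "gct_lt xi s (Suc s) = xi (s, Suc s)"
  by (subst gct_lt.simps) simp

lemma gct_lt_Suc_Suc:
  "gct_lt xi s (Suc (Suc s)) =
     (if xi (s, Suc s) = xi (Suc s, Suc (Suc s)) then xi (s, Suc s) else xi (s, Suc (Suc s)))"
proof -
  have e: "{s<..<Suc (Suc s)} = {Suc s}"
    by auto
  show ?thesis
    by (subst gct_lt.simps) (simp add: e gct_lt_Suc)
qed

definition op_window :: "nat \<Rightarrow> (nat \<times> nat) list" where
  "op_window t = [(t, Suc t), (Suc t, Suc (Suc t)), (t, Suc (Suc t))]"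

text \<open>
  The coins \<open>u\<close>, \<open>v\<close> of \<^const>\<open>op_window\<close> decide \<open>X t < X (t+1)\<close> and
  \<open>X (t+1) < X (t+2)\<close>; the comparison \<open>w\<close> of \<open>X t\<close> with \<open>X (t+2)\<close> is forced by
  transitivity when \<open>u = v\<close>. Each rank is one plus the number of smaller values.
\<close>
definition op_of_coins :: "bool list \<Rightarrow> nat list" where
  "op_of_coins bs =
     (let u = bs ! 0; v = bs ! 1; w = (if u = v then u else bs ! 2)
      in [1 + of_bool (\<not> u) + of_bool (\<not> w), 1 + of_bool u + of_bool (\<not> v), 1 + of_bool w + of_bool v])"

lemma card_filter_less_3:
  "card {j \<in> {0..<3::nat}. P j} = of_bool (P 0) + of_bool (P 1) + of_bool (P 2)"
proof -
  have "card {j\<in>{0..<3::nat}. P j} = (\<Sum>j\<in>{0..<3::nat}. if P j then 1 else 0)"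
    by (simp add: sum.If_cases Int_def conj_commute)
  then show ?thesis
    by (simp add: eval_nat_numeral)
qed

lemma gct_op_eq_op_of_coins: "gct_op xi t = op_of_coins (map xi (op_window t))"
proof -
  have "[0..<3] = [0, 1, 2::nat]"
    by (simp add: upt_rec)
  then show ?thesis
    unfolding gct_op_def op_of_coins_def op_window_def card_filter_less_3
    by (simp add: gct_less_def gct_lt_Suc gct_lt_Suc_Suc Let_def eval_nat_numeral)
qed

lemma prob_coins_eq_prob_replicate_pmf:
  assumes "distinct cs" "\<forall>(s, t)\<in>set cs. s < t \<and> t < n"
  shows "measure_pmf.prob (coins p n) {xi. P (map xi cs)} =
    measure_pmf.prob (replicate_pmf (length cs) (bernoulli_pmf p)) {bs. P bs}"
proof -
  have "finite {(s, t). s < t \<and> t < n}"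
    by (rule finite_subset[of _ "{..<n} \<times> {..<n}"]) auto
  moreover have "set cs \<subseteq> {(s, t). s < t \<and> t < n}"
    using assms(2) by auto
  ultimately have "replicate_pmf (length cs) (bernoulli_pmf p) = map_pmf (\<lambda>xi. map xi cs) (coins p n)"
    unfolding coins_def using assms(1) by (simp add: map_Pi_pmf_eq_replicate_pmf)
  then show ?thesis
    by (simp add: vimage_def)
qed

lemma gct_p_eq_prob_replicate:
  "gct_p p i = measure_pmf.prob (replicate_pmf 3 (bernoulli_pmf p)) {bs. op_of_coins bs = op_pi i}"
proof -
  have "gct_p p i = measure_pmf.prob (coins p 3) {xi. op_of_coins (map xi (op_window 0)) = op_pi i}"
    by (simp add: gct_p_def gct_op_eq_op_of_coins)
  also have "\<dots> = measure_pmf.prob (replicate_pmf 3 (bernoulli_pmf p)) {bs. op_of_coins bs = op_pi i}"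
    by (subst prob_coins_eq_prob_replicate_pmf) (auto simp: op_window_def eval_nat_numeral simp del: replicate_pmf.simps)
  finally show ?thesis .
qed

lemma gct_pp_1_eq_prob_replicate:
  "gct_pp p i j 1 = measure_pmf.prob (replicate_pmf 5 (bernoulli_pmf p))
     {bs. op_of_coins (take 3 bs) = op_pi i \<and> op_of_coins [bs ! 1, bs ! 3, bs ! 4] = op_pi j}"
proof -
  let ?cs = "[(0, 1), (1, 2), (0, 2), (2, 3), (1, 3)]"
  have "gct_pp p i j 1 = measure_pmf.prob (coins p 4)
     {xi. (\<lambda>bs. op_of_coins (take 3 bs) = op_pi i \<and> op_of_coins [bs ! 1, bs ! 3, bs ! 4] = op_pi j)
        (map xi ?cs)}"
    by (simp add: gct_pp_def gct_op_eq_op_of_coins op_window_def eval_nat_numeral)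
  also have "\<dots> = measure_pmf.prob (replicate_pmf 5 (bernoulli_pmf p))
     {bs. op_of_coins (take 3 bs) = op_pi i \<and> op_of_coins [bs ! 1, bs ! 3, bs ! 4] = op_pi j}"
    by (subst prob_coins_eq_prob_replicate_pmf) (auto simp: eval_nat_numeral simp del: replicate_pmf.simps)
  finally show ?thesis .
qed

lemma gct_pp_Suc_Suc: "gct_pp p i j (Suc (Suc k)) = gct_p p i * gct_p p j"
proof -
  have "gct_pp p i j (Suc (Suc k)) = measure_pmf.prob (coins p (Suc (Suc k) + 3))
     {xi. (\<lambda>bs. op_of_coins (take 3 bs) = op_pi i \<and> op_of_coins (drop 3 bs) = op_pi j)
        (map xi (op_window 0 @ op_window (Suc (Suc k))))}"
    by (simp add: gct_pp_def gct_op_eq_op_of_coins op_window_def)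
  also have "\<dots> = measure_pmf.prob (replicate_pmf (3 + 3) (bernoulli_pmf p))
     {bs. op_of_coins (take 3 bs) = op_pi i \<and> op_of_coins (drop 3 bs) = op_pi j}"
    by (subst prob_coins_eq_prob_replicate_pmf) (auto simp: op_window_def eval_nat_numeral simp del: replicate_pmf.simps)
  also have "\<dots> = gct_p p i * gct_p p j"
    using prob_replicate_pmf_take_drop[where m = 3 and n = 3 and q = "bernoulli_pmf p"
        and P = "\<lambda>xs. op_of_coins xs = op_pi i" and Q = "\<lambda>ys. op_of_coins ys = op_pi j"]
    by (simp only: gct_p_eq_prob_replicate)
  finally show ?thesis .
qed

lemma gct_cov_term_sums:
  "(\<lambda>k. gct_cov_term p i j (Suc k)) sums gct_cov_term p i j 1"
proof -
  have "gct_cov_term p i j (Suc k) = 0" if "k \<notin> {0}" for k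
    using that by (cases k) (simp_all add: gct_cov_term_def gct_pp_Suc_Suc)
  then show ?thesis
    using sums_finite[of "{0}" "\<lambda>k. gct_cov_term p i j (Suc k)"] by simp
qed

lemma gct_sigma_eq:
  "gct_sigma p i j = gct_p p i * (of_bool (i = j) - gct_p p j) + gct_cov_term p i j 1"
  using sums_unique[OF gct_cov_term_sums] by (simp add: gct_sigma_def)

lemma atLeastAtMost_1_6: "{1..6::nat} = {1, 2, 3, 4, 5, 6}"
  by auto

lemma gct_p_fair_coin:
  "\<forall>i\<in>{1..6}. gct_p (1/2) i = [1/4, 1/8, 1/8, 1/8, 1/8, 1/4] ! (i - 1)"
  unfolding atLeastAtMost_1_6 gct_p_eq_prob_replicate prob_replicate_pmf_fair_coin
    card_bool_lists_eq_length_filter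
  by (simp add: op_of_coins_def op_pi_def eval_nat_numeral)

lemma gct_pp_1_fair_coin:
  "\<forall>i\<in>{1..6}. \<forall>j\<in>{1..6}. gct_pp (1/2) i j 1 =
     [[1/8, 1/16, 0, 1/16, 0, 0],
      [0, 0, 1/32, 0, 1/32, 1/16],
      [1/16, 1/32, 0, 1/32, 0, 0],
      [0, 0, 1/32, 0, 1/32, 1/16],
      [1/16, 1/32, 0, 1/32, 0, 0],
      [0, 0, 1/16, 0, 1/16, 1/8]] ! (i - 1) ! (j - 1)"
  unfolding atLeastAtMost_1_6 gct_pp_1_eq_prob_replicate prob_replicate_pmf_fair_coin
    card_bool_lists_eq_length_filter
  by (simp add: op_of_coins_def op_pi_def eval_nat_numeral)

theorem corollary3p3:
  shows "(\<forall>i\<in>{1..6}. gct_p (1/2) i = [1/4, 1/8, 1/8, 1/8, 1/8, 1/4] ! (i - 1))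
    \<and> (\<forall>i\<in>{1..6}. \<forall>j\<in>{1..6}.
          summable (\<lambda>k. gct_cov_term (1/2) i j (Suc k))
        \<and> gct_sigma (1/2) i j =
            ([[20, -2, -2, -2, -2, -12],
              [-2, 5, 1, -3, 1, -2],
              [-2, 1, 5, 1, -3, -2],
              [-2, -3, 1, 5, 1, -2],
              [-2, 1, -3, 1, 5, -2],
              [-12, -2, -2, -2, -2, 20]] ! (i - 1) ! (j - 1)) / (64::real))"
proof -
  have sigma: "gct_sigma (1/2) i j = gct_p (1/2) i * (of_bool (i = j) - gct_p (1/2) j)
      + gct_pp (1/2) i j 1 + gct_pp (1/2) j i 1 - 2 * gct_p (1/2) i * gct_p (1/2) j" for i j
    by (simp add: gct_sigma_eq gct_cov_term_def)
  have summable: "summable (\<lambda>k. gct_cov_term (1/2) i j (Suc k))" for i j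
    using gct_cov_term_sums by (rule sums_summable)
  show ?thesis
    unfolding atLeastAtMost_1_6 \<comment> \<open>\<open>One_nat_def\<close> would turn the lag \<open>1\<close> into \<open>Suc 0\<close>\<close>
    by (simp add: summable sigma gct_p_fair_coin[rule_format] gct_pp_1_fair_coin[rule_format]
        del: One_nat_def)
qed

end
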